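(* Let $0<\alpha<1$ and let $n$ be a positive integer. Assume the following induction hypothesis: for every integer $m$ with $1 \le m < n$, every digraph on $m$ vertices with minimum outdegree at least $\alpha m$ contains a directed cycle of length at most $4$. Let $G$ be a digraph on $n$ vertices such that: - every vertex of $G$ has outdegree exactly $r=\lceil \alpha n\rceil$; - $G$ contains no directed cycle of length at most $4$. Then for every arc $(u,v)\in E(G)$, $$n > r + \deg^-(v) + q(u,v) + (1-\alpha) r + (1-\alpha)^2\, t(u,v).$$
   Context: Digraphs have no loops and no parallel arcs; the arcs $(u,v)$ and $(v,u)$ together count as a directed cycle of length $2$. For a vertex $v$, define - $N^+(v)=\{u:(v,u)\in E(G)\}$; - $N^-(v)=\{u:(u,v)\in E(G)\}$; - $\deg^-(v)=|N^-(v)|$. For an arc $(u,v)\in E(G)$, define - $q(u,v)=|N^-(u)\setminus N^-(v)|$; - $t(u,v)=|N^+(u)\cap N^+(v)|$, the number of transitive triangles with base $(u,v)$. *)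

theory Defs
  imports Complex_Main
begin

definition digraph :: "'a set \<Rightarrow> ('a \<times> 'a) set \<Rightarrow> bool" where
  "digraph V E \<longleftrightarrow> finite V \<and> E \<subseteq> V \<times> V \<and> (\<forall>v. (v, v) \<notin> E)"

definition out_nbrs :: "('a \<times> 'a) set \<Rightarrow> 'a \<Rightarrow> 'a set" where
  "out_nbrs E v = {u. (v, u) \<in> E}"

definition in_nbrs :: "('a \<times> 'a) set \<Rightarrow> 'a \<Rightarrow> 'a set" where
  "in_nbrs E v = {u. (u, v) \<in> E}"

definition indeg :: "('a \<times> 'a) set \<Rightarrow> 'a \<Rightarrow> nat" where
  "indeg E v = card (in_nbrs E v)"

definition outdeg :: "('a \<times> 'a) set \<Rightarrow> 'a \<Rightarrow> nat" where
  "outdeg E v = card (out_nbrs E v)"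

definition qq :: "('a \<times> 'a) set \<Rightarrow> 'a \<Rightarrow> 'a \<Rightarrow> nat" where
  "qq E u v = card (in_nbrs E u - in_nbrs E v)"

definition tt :: "('a \<times> 'a) set \<Rightarrow> 'a \<Rightarrow> 'a \<Rightarrow> nat" where
  "tt E u v = card (out_nbrs E u \<inter> out_nbrs E v)"

definition is_dcycle :: "('a \<times> 'a) set \<Rightarrow> 'a list \<Rightarrow> bool" where
  "is_dcycle E vs \<longleftrightarrow> vs \<noteq> [] \<and> distinct vs \<and>
     (\<forall>i < length vs. (vs ! i, vs ! ((i + 1) mod length vs)) \<in> E)"

definition has_short_cycle :: "'a set \<Rightarrow> ('a \<times> 'a) set \<Rightarrow> nat \<Rightarrow> bool" where
  "has_short_cycle V E k \<longleftrightarrow> (\<exists>vs. set vs \<subseteq> V \<and> is_dcycle E vs \<and> length vs \<le> k)"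

end

theory Submission
  imports Defs
begin

(* The induction hypothesis says that every
   digraph on fewer than n vertices with minimum outdegree at least alpha times its order has a
   short cycle; applied to induced subgraphs it shows that every nonempty proper vertex set S
   contains a vertex with fewer than alpha |S| out-neighbours inside S ("proper sparseness").
   The vertices are split into v, P = N+(v), N = N-(v), Q = N-(u) \ N-(v) and the rest R;
   no short cycles make these parts disjoint and force out-neighbours of P to lie in P u R.
   Sparseness of a set P u X with X a subset of R closed in the same sense yields
   |R| > (1-alpha) r + (1-alpha) |X|; choosing X = N+(x) \ P for a sparse vertex x of
   T = N+(u) n N+(v) gives |X| >= (1-alpha) |T|.  Counting |V| = 1 + r + |N| + |Q| + |R| then
   proves the inequality. *)

definition sparse_proper :: "real \<Rightarrow> 'a set \<Rightarrow> ('a \<times> 'a) set \<Rightarrow> bool" where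
  "sparse_proper \<alpha> V E \<longleftrightarrow> (\<forall>S \<subseteq> V. S \<noteq> {} \<longrightarrow> card S < card V \<longrightarrow>
     (\<exists>z\<in>S. real (card (out_nbrs E z \<inter> S)) < \<alpha> * real (card S)))"

text \<open>If |A| = |P| and T \<subseteq> P, each element of T missed by A is paid for by an element of A
  outside P.  Used to show that a vertex with few out-neighbours in T has many outside P.\<close>
lemma card_le_Diff_plus_Int:
  assumes fin: "finite A" "finite P" and eq: "card A = card P" and TP: "T \<subseteq> P"
  shows "card T \<le> card (A - P) + card (A \<inter> T)"
proof -
  have finT: "finite T" using TP fin(2) finite_subset by blast
  have "card (A \<inter> P) \<le> card ((A \<inter> T) \<union> (P - T))"
    using fin by (intro card_mono) auto
  also have "\<dots> \<le> card (A \<inter> T) + card (P - T)" by (rule card_Un_le)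
  finally have "card (A \<inter> P) \<le> card (A \<inter> T) + (card P - card T)"
    using TP finT by (simp add: card_Diff_subset)
  moreover have "card A = card (A \<inter> P) + card (A - P)" using fin(1) by (rule card_Int_Diff)
  moreover have "card T \<le> card P" using TP fin(2) by (rule card_mono[rotated])
  ultimately show ?thesis using eq by linarith
qed

subsection \<open>Relabelling digraphs\<close>

lemma arc_image_iff:
  assumes inj: "inj_on f S" and F: "F \<subseteq> S \<times> S" and ab: "a \<in> S" "b \<in> S"
  shows "(f a, f b) \<in> map_prod f f ` F \<longleftrightarrow> (a, b) \<in> F"
proof
  assume "(f a, f b) \<in> map_prod f f ` F"
  then obtain a' b' where "(a', b') \<in> F" "f a' = f a" "f b' = f b" by auto
  moreover have "a' \<in> S" "b' \<in> S" using \<open>(a', b') \<in> F\<close> F by auto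
  ultimately show "(a, b) \<in> F" using inj ab by (metis inj_onD)
qed auto

lemma digraph_relabel:
  assumes inj: "inj_on f S" and G: "digraph S F"
  shows "digraph (f ` S) (map_prod f f ` F)"
  unfolding digraph_def
proof (intro conjI allI)
  have FS: "F \<subseteq> S \<times> S" using G by (simp add: digraph_def)
  show "finite (f ` S)" using G by (simp add: digraph_def)
  show "map_prod f f ` F \<subseteq> f ` S \<times> f ` S" using FS by auto
  fix x show "(x, x) \<notin> map_prod f f ` F"
  proof
    assume "(x, x) \<in> map_prod f f ` F"
    then obtain a b where ab: "(a, b) \<in> F" "f a = x" "f b = x" by auto
    then have "a = b" using FS inj by (metis SigmaD1 SigmaD2 inj_onD subsetD)
    then show False using ab G by (auto simp: digraph_def)
  qed
qed

lemma out_nbrs_relabel: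
  assumes inj: "inj_on f S" and F: "F \<subseteq> S \<times> S" and a: "a \<in> S"
  shows "card (out_nbrs (map_prod f f ` F) (f a)) = card (out_nbrs F a)"
proof -
  have "out_nbrs (map_prod f f ` F) (f a) = f ` out_nbrs F a"
    using F arc_image_iff[OF inj F a] unfolding out_nbrs_def by fastforce
  moreover have "inj_on f (out_nbrs F a)"
    using F by (intro inj_on_subset[OF inj]) (auto simp: out_nbrs_def)
  ultimately show ?thesis by (simp add: card_image)
qed

lemma has_short_cycle_relabel:
  assumes inj: "inj_on f S" and F: "F \<subseteq> S \<times> S"
    and cyc: "has_short_cycle (f ` S) (map_prod f f ` F) k"
  shows "has_short_cycle S F k"
proof -
  obtain vs where vs: "set vs \<subseteq> f ` S" "is_dcycle (map_prod f f ` F) vs" "length vs \<le> k"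
    using cyc unfolding has_short_cycle_def by blast
  define ws where "ws = map (inv_into S f) vs"
  have wsS: "set ws \<subseteq> S" unfolding ws_def using vs(1) by (auto intro: inv_into_into)
  have vs_ws: "vs = map f ws" unfolding ws_def using vs(1) by (simp add: map_idI f_inv_into_f subset_iff)
  have "is_dcycle F ws" unfolding is_dcycle_def
  proof (intro conjI allI impI)
    show "ws \<noteq> []" "distinct ws" using vs(2) vs_ws by (auto simp: is_dcycle_def distinct_map)
    fix i assume i: "i < length ws"
    then have j: "(i + 1) mod length ws < length ws" by (intro mod_less_divisor) auto
    have "(f (ws ! i), f (ws ! ((i + 1) mod length ws))) \<in> map_prod f f ` F"
      using vs(2) i j vs_ws by (auto simp: is_dcycle_def)
    then show "(ws ! i, ws ! ((i + 1) mod length ws)) \<in> F"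
      using arc_image_iff[OF inj F] wsS i j by (meson nth_mem subsetD)
  qed
  then show ?thesis using wsS vs(3) vs_ws unfolding has_short_cycle_def by auto
qed

lemma has_short_cycle_mono:
  assumes cyc: "has_short_cycle S F k" and SV: "S \<subseteq> V" and FE: "F \<subseteq> E"
  shows "has_short_cycle V E k"
proof -
  obtain vs where vs: "set vs \<subseteq> S" "is_dcycle F vs" "length vs \<le> k"
    using cyc unfolding has_short_cycle_def by blast
  have "is_dcycle E vs" using vs(2) FE unfolding is_dcycle_def by blast
  then show ?thesis using vs SV unfolding has_short_cycle_def by blast
qed

subsection \<open>Digraphs without short cycles\<close>

locale c4_free_digraph =
  fixes V :: "'a set" and E :: "('a \<times> 'a) set"
  assumes digraph: "digraph V E"
    and no_short_cycle: "\<not> has_short_cycle V E 4"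
begin

lemma finite_V: "finite V" and arcs_in_V: "E \<subseteq> V \<times> V" and no_loop: "(x, x) \<notin> E"
  using digraph by (auto simp: digraph_def)

lemma out_nbrs_in_V: "out_nbrs E x \<subseteq> V" and in_nbrs_in_V: "in_nbrs E x \<subseteq> V"
  using arcs_in_V by (auto simp: out_nbrs_def in_nbrs_def)

lemma finite_out_nbrs: "finite (out_nbrs E x)"
  using out_nbrs_in_V finite_V by (rule finite_subset)

text \<open>Closed walks of length 2, 3 and 4 are excluded; a closed walk of length 4 has
  distinct vertices because a repeated vertex would give a 2-cycle.\<close>
lemma no_dcycle: "set vs \<subseteq> V \<Longrightarrow> is_dcycle E vs \<Longrightarrow> length vs \<le> 4 \<Longrightarrow> False"
  using no_short_cycle unfolding has_short_cycle_def by blast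

lemma no_2cycle:
  assumes "(a, b) \<in> E" "(b, a) \<in> E"
  shows False
proof (rule no_dcycle)
  show "is_dcycle E [a, b]"
    using assms no_loop by (auto simp: is_dcycle_def less_Suc_eq)
qed (use assms arcs_in_V in auto)

lemma no_3cycle:
  assumes e: "(a, b) \<in> E" "(b, c) \<in> E" "(c, a) \<in> E"
  shows False
proof (rule no_dcycle)
  have "a \<noteq> b" "b \<noteq> c" "c \<noteq> a" using e no_loop by auto
  then show "is_dcycle E [a, b, c]" unfolding is_dcycle_def
  proof (intro conjI allI impI)
    fix i assume "i < length [a, b, c]"
    then have "i = 0 \<or> i = 1 \<or> i = 2" by auto
    then show "([a, b, c] ! i, [a, b, c] ! ((i + 1) mod length [a, b, c])) \<in> E" using e by auto
  qed auto
qed (use e arcs_in_V in auto)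

lemma no_4cycle:
  assumes e: "(a, b) \<in> E" "(b, c) \<in> E" "(c, d) \<in> E" "(d, a) \<in> E"
  shows False
proof (rule no_dcycle)
  have "a \<noteq> b" "b \<noteq> c" "c \<noteq> d" "d \<noteq> a" using e no_loop by auto
  moreover have "a \<noteq> c" "b \<noteq> d" using no_2cycle e by blast+
  ultimately show "is_dcycle E [a, b, c, d]" unfolding is_dcycle_def
  proof (intro conjI allI impI)
    fix i assume "i < length [a, b, c, d]"
    then have "i = 0 \<or> i = 1 \<or> i = 2 \<or> i = 3" by auto
    then show "([a, b, c, d] ! i, [a, b, c, d] ! ((i + 1) mod length [a, b, c, d])) \<in> E"
      using e by auto
  qed auto
qed (use e arcs_in_V in auto)

text \<open>The induction hypothesis, applied to induced subgraphs relabelled by natural numbers,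
  yields proper sparseness.\<close>
lemma sparse_proper_from_smaller_digraphs:
  fixes \<alpha> :: real
  assumes IH: "\<And>m (W :: nat set) F. 1 \<le> m \<Longrightarrow> m < card V \<Longrightarrow> digraph W F \<Longrightarrow> card W = m \<Longrightarrow>
              (\<forall>w\<in>W. real (outdeg F w) \<ge> \<alpha> * real m) \<Longrightarrow> has_short_cycle W F 4"
  shows "sparse_proper \<alpha> V E"
  unfolding sparse_proper_def
proof (intro allI impI)
  fix S assume S: "S \<subseteq> V" "S \<noteq> {}" "card S < card V"
  show "\<exists>z\<in>S. real (card (out_nbrs E z \<inter> S)) < \<alpha> * real (card S)"
  proof (rule ccontr)
    assume dense: "\<not> ?thesis"
    have finS: "finite S" using S(1) finite_V finite_subset by blast
    obtain f :: "'a \<Rightarrow> nat" where f: "bij_betw f S {0..<card S}"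
      using ex_bij_betw_finite_nat[OF finS] by blast
    then have inj: "inj_on f S" and card_img: "card (f ` S) = card S"
      by (auto simp: bij_betw_def card_image)
    define F where "F = E \<inter> S \<times> S"
    have FS: "F \<subseteq> S \<times> S" unfolding F_def by blast
    have dg: "digraph S F" using digraph S(1) finS unfolding F_def digraph_def by auto
    have out_F: "out_nbrs F z = out_nbrs E z \<inter> S" if "z \<in> S" for z
      using that unfolding F_def out_nbrs_def by auto
    have deg: "\<forall>w\<in>f ` S. real (outdeg (map_prod f f ` F) w) \<ge> \<alpha> * real (card S)"
      using dense out_F out_nbrs_relabel[OF inj FS] unfolding outdeg_def by fastforce
    have "1 \<le> card S" using S(2) finS by (simp add: Suc_leI card_gt_0_iff)
    then have "has_short_cycle (f ` S) (map_prod f f ` F) 4"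
      by (rule IH[OF _ S(3) digraph_relabel[OF inj dg] card_img deg])
    then have "has_short_cycle S F 4" using has_short_cycle_relabel[OF inj FS] by blast
    then show False using no_short_cycle has_short_cycle_mono S(1) unfolding F_def by blast
  qed
qed

end

subsection \<open>Regular, properly sparse digraphs without short cycles\<close>

locale regular_c4_free_digraph = c4_free_digraph +
  fixes \<alpha> :: real and r :: nat
  assumes regular: "\<forall>x\<in>V. card (out_nbrs E x) = r"
    and r_pos: "0 < r"
    and sparse: "sparse_proper \<alpha> V E"
begin

text \<open>If all out-neighbours of a proper set S lie in S \<union> Y, the sparse vertex of S sends
  more than r - \<alpha>|S| arcs into Y.\<close>
lemma escaping_out_nbrs:
  assumes S: "S \<subseteq> V" "S \<noteq> {}" "card S < card V"
    and Y: "finite Y" and closed: "\<forall>z\<in>S. out_nbrs E z \<subseteq> S \<union> Y"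
  shows "real (card Y) > real r - \<alpha> * real (card S)"
proof -
  obtain z where z: "z \<in> S" "real (card (out_nbrs E z \<inter> S)) < \<alpha> * real (card S)"
    using sparse S unfolding sparse_proper_def by blast
  have "out_nbrs E z - S \<subseteq> Y" using closed z(1) by blast
  then have "card (out_nbrs E z - S) \<le> card Y" using Y by (rule card_mono[rotated])
  moreover have "card (out_nbrs E z) = card (out_nbrs E z \<inter> S) + card (out_nbrs E z - S)"
    using finite_out_nbrs by (rule card_Int_Diff)
  moreover have "card (out_nbrs E z) = r" using regular z(1) S(1) by blast
  ultimately show ?thesis using z(2) by linarith
qed

text \<open>For an arc (u,v), the set {v} \<union> N-(u) \<union> N-(v): a vertex two steps away from v, or two
  steps away from a common out-neighbour of u and v, cannot lie in it without closing a
  cycle of length at most 4.\<close>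
definition blocked :: "'a \<Rightarrow> 'a \<Rightarrow> 'a set" where
  "blocked u v = insert v (in_nbrs E u \<union> in_nbrs E v)"

definition far :: "'a \<Rightarrow> 'a \<Rightarrow> 'a set" where
  "far u v = V - (out_nbrs E v \<union> blocked u v)"

lemma far_disjoint_out_nbrs: "out_nbrs E v \<inter> far u v = {}"
  unfolding far_def by blast

lemma out_nbrs_unblocked:
  assumes "out_nbrs E z \<inter> blocked u v = {}"
  shows "out_nbrs E z \<subseteq> out_nbrs E v \<union> far u v"
  using assms out_nbrs_in_V unfolding far_def by blast

lemma two_steps_from_head_unblocked:
  assumes "(u, v) \<in> E" "(v, z) \<in> E"
  shows "out_nbrs E z \<inter> blocked u v = {}"
  using assms no_2cycle no_3cycle no_4cycle
  unfolding blocked_def out_nbrs_def in_nbrs_def by blast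

lemma two_steps_from_common_out_nbr_unblocked:
  assumes "(u, x) \<in> E" "(v, x) \<in> E" "(x, z) \<in> E"
  shows "out_nbrs E z \<inter> blocked u v = {}"
  using assms no_3cycle no_4cycle unfolding blocked_def out_nbrs_def in_nbrs_def by blast

lemma card_V_partition:
  assumes uv: "(u, v) \<in> E"
  shows "card V = 1 + r + indeg E v + qq E u v + card (far u v)"
proof -
  define P N Q where "P = out_nbrs E v" and "N = in_nbrs E v" and "Q = in_nbrs E u - in_nbrs E v"
  have vV: "v \<in> V" using uv arcs_in_V by blast
  have fin: "finite P" "finite N" "finite Q"
    unfolding P_def N_def Q_def using finite_V in_nbrs_in_V finite_out_nbrs
    by (auto intro: finite_subset)
  have disj: "v \<notin> P" "v \<notin> N" "v \<notin> Q" "P \<inter> N = {}" "P \<inter> Q = {}" "N \<inter> Q = {}"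
    unfolding P_def N_def Q_def out_nbrs_def in_nbrs_def
    using no_loop no_2cycle[OF uv] no_2cycle no_3cycle[OF uv] by auto
  have A: "out_nbrs E v \<union> blocked u v = insert v (P \<union> N \<union> Q)"
    unfolding P_def N_def Q_def blocked_def by blast
  have AV: "insert v (P \<union> N \<union> Q) \<subseteq> V"
    using vV out_nbrs_in_V in_nbrs_in_V unfolding P_def N_def Q_def by blast
  have "card (insert v (P \<union> N \<union> Q)) = 1 + card P + card N + card Q"
    using fin disj by (simp add: card_Un_disjoint Int_Un_distrib2)
  moreover have "card (far u v) = card V - card (insert v (P \<union> N \<union> Q))"
    unfolding far_def A using AV finite_V by (meson card_Diff_subset finite_subset)
  moreover have "card (insert v (P \<union> N \<union> Q)) \<le> card V" using AV finite_V by (rule card_mono[rotated])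
  moreover have "card P = r" unfolding P_def using regular vV by blast
  ultimately show ?thesis unfolding N_def Q_def indeg_def qq_def by linarith
qed

text \<open>Sparseness of N+(v) \<union> X, for X \<subseteq> R closed like N+(v), forces R to be large.\<close>
lemma far_lower_bound:
  assumes uv: "(u, v) \<in> E" and X: "X \<subseteq> far u v"
    and closed: "\<forall>z\<in>X. out_nbrs E z \<subseteq> out_nbrs E v \<union> far u v"
  shows "real (card (far u v)) > (1 - \<alpha>) * real r + (1 - \<alpha>) * real (card X)"
proof -
  define P where "P = out_nbrs E v"
  define S where "S = P \<union> X"
  have vV: "v \<in> V" using uv arcs_in_V by blast
  have finF: "finite (far u v)" unfolding far_def using finite_V by simp
  have finX: "finite X" using X finF finite_subset by blast
  have cP: "card P = r" unfolding P_def using regular vV by blast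
  have finP: "finite P" unfolding P_def by (rule finite_out_nbrs)
  have "P \<inter> X = {}" using X far_disjoint_out_nbrs unfolding P_def by blast
  then have cS: "card S = r + card X"
    unfolding S_def using card_Un_disjoint[OF finP finX] cP by simp
  have SV: "S \<subseteq> V" "v \<notin> S"
    unfolding S_def P_def using X out_nbrs_in_V no_loop by (auto simp: far_def blocked_def out_nbrs_def)
  then have "card S < card V" using vV finite_V by (intro psubset_card_mono) auto
  moreover have "S \<noteq> {}" using cS r_pos by auto
  moreover have "\<forall>z\<in>S. out_nbrs E z \<subseteq> S \<union> (far u v - X)"
  proof
    fix z assume z: "z \<in> S"
    have "out_nbrs E z \<subseteq> P \<union> far u v"
    proof (cases "z \<in> P")
      case True
      then have "(v, z) \<in> E" unfolding P_def out_nbrs_def by simp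
      then show ?thesis
        unfolding P_def by (rule out_nbrs_unblocked[OF two_steps_from_head_unblocked[OF uv]])
    next
      case False
      then show ?thesis using z closed unfolding S_def P_def by blast
    qed
    then show "out_nbrs E z \<subseteq> S \<union> (far u v - X)" unfolding S_def by blast
  qed
  ultimately have "real (card (far u v - X)) > real r - \<alpha> * real (card S)"
    using escaping_out_nbrs SV(1) finF by blast
  moreover have "card (far u v) = card X + card (far u v - X)"
    using card_Diff_subset[OF finX X] card_mono[OF finF X] by simp
  ultimately show ?thesis using cS by (simp add: algebra_simps)
qed

text \<open>A sparse vertex x of T = N+(u) \<inter> N+(v) supplies the closed set X = N+(x) - N+(v) \<subseteq> R
  of size at least (1 - \<alpha>)|T|.\<close>
lemma closed_far_set_exists:
  assumes uv: "(u, v) \<in> E"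
  obtains X where "X \<subseteq> far u v" "\<forall>z\<in>X. out_nbrs E z \<subseteq> out_nbrs E v \<union> far u v"
    "(1 - \<alpha>) * real (tt E u v) \<le> real (card X)"
proof (cases "tt E u v = 0")
  case True
  then show ?thesis using that[of "{}"] by simp
next
  case False
  define P T where "P = out_nbrs E v" and "T = out_nbrs E u \<inter> out_nbrs E v"
  have vV: "v \<in> V" using uv arcs_in_V by blast
  have TP: "T \<subseteq> P" unfolding T_def P_def by blast
  have finP: "finite P" unfolding P_def by (rule finite_out_nbrs)
  have cP: "card P = r" unfolding P_def using regular vV by blast
  have TV: "T \<subseteq> V" using TP out_nbrs_in_V unfolding P_def by blast
  have "T \<noteq> {}" using False unfolding tt_def T_def by auto
  moreover have "card T < card V"
    using card_mono[OF finP TP] cP card_V_partition[OF uv] by linarith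
  ultimately obtain x where x: "x \<in> T" "real (card (out_nbrs E x \<inter> T)) < \<alpha> * real (card T)"
    using sparse TV unfolding sparse_proper_def by blast
  have ux: "(u, x) \<in> E" and vx: "(v, x) \<in> E" using x(1) unfolding T_def out_nbrs_def by auto
  define X where "X = out_nbrs E x - P"
  have XR: "X \<subseteq> far u v"
    unfolding X_def P_def using out_nbrs_unblocked[OF two_steps_from_head_unblocked[OF uv vx]] by blast
  have X_closed: "\<forall>z\<in>X. out_nbrs E z \<subseteq> out_nbrs E v \<union> far u v"
  proof
    fix z assume "z \<in> X"
    then have "(x, z) \<in> E" unfolding X_def out_nbrs_def by simp
    then show "out_nbrs E z \<subseteq> out_nbrs E v \<union> far u v"
      by (rule out_nbrs_unblocked[OF two_steps_from_common_out_nbr_unblocked[OF ux vx]])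
  qed
  have "card (out_nbrs E x) = card P" using regular x(1) TV cP by auto
  then have "card T \<le> card X + card (out_nbrs E x \<inter> T)"
    unfolding X_def by (rule card_le_Diff_plus_Int[OF finite_out_nbrs finP _ TP])
  then have "(1 - \<alpha>) * real (card T) \<le> real (card X)" using x(2) by (simp add: algebra_simps)
  then show ?thesis using that[OF XR X_closed] unfolding tt_def T_def by blast
qed

text \<open>The inequality for a single arc: combine the partition count with the two bounds above,
  using (1 - \<alpha>)|X| \<ge> (1 - \<alpha>)^2 |T| for \<alpha> \<le> 1.\<close>
lemma arc_inequality:
  assumes uv: "(u, v) \<in> E" and alpha_le: "\<alpha> \<le> 1"
  shows "real (card V) > real r + real (indeg E v) + real (qq E u v)
                         + (1 - \<alpha>) * real r + (1 - \<alpha>)^2 * real (tt E u v)"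
proof -
  obtain X where X: "X \<subseteq> far u v" "\<forall>z\<in>X. out_nbrs E z \<subseteq> out_nbrs E v \<union> far u v"
    and big: "(1 - \<alpha>) * real (tt E u v) \<le> real (card X)"
    using closed_far_set_exists[OF uv] by blast
  have "(1 - \<alpha>)^2 * real (tt E u v) \<le> (1 - \<alpha>) * real (card X)"
    using mult_left_mono[OF big] alpha_le by (simp add: power2_eq_square mult.assoc)
  then show ?thesis
    using far_lower_bound[OF uv X] card_V_partition[OF uv] by linarith
qed

end

theorem mainTheorem2:
  fixes \<alpha> :: real and n :: nat and V :: "'a set" and E :: "('a \<times> 'a) set"
  assumes alpha: "0 < \<alpha>" "\<alpha> < 1"
    and npos: "0 < n"
    and IH: "\<And>m (W :: nat set) F. 1 \<le> m \<Longrightarrow> m < n \<Longrightarrow> digraph W F \<Longrightarrow> card W = m \<Longrightarrow>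
              (\<forall>w\<in>W. real (outdeg F w) \<ge> \<alpha> * real m) \<Longrightarrow> has_short_cycle W F 4"
    and G: "digraph V E" "card V = n"
    and reg: "\<forall>v\<in>V. outdeg E v = nat \<lceil>\<alpha> * real n\<rceil>"
    and nocyc: "\<not> has_short_cycle V E 4"
  shows "\<forall>(u, v) \<in> E.
           real n > real (nat \<lceil>\<alpha> * real n\<rceil>) + real (indeg E v) + real (qq E u v)
                    + (1 - \<alpha>) * real (nat \<lceil>\<alpha> * real n\<rceil>)
                    + (1 - \<alpha>)^2 * real (tt E u v)"
proof -
  interpret c4_free_digraph V E using G(1) nocyc by unfold_locales
  have "0 < nat \<lceil>\<alpha> * real n\<rceil>" using alpha npos by simp
  moreover have "sparse_proper \<alpha> V E"
  proof (rule sparse_proper_from_smaller_digraphs)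
    fix m and W :: "nat set" and F
    assume "1 \<le> m" "m < card V" "digraph W F" "card W = m"
      "\<forall>w\<in>W. \<alpha> * real m \<le> real (outdeg F w)"
    then show "has_short_cycle W F 4" using IH[of m W F] G(2) by simp
  qed
  ultimately interpret regular_c4_free_digraph V E \<alpha> "nat \<lceil>\<alpha> * real n\<rceil>"
    using reg by unfold_locales (auto simp: outdeg_def)
  show ?thesis
  proof (intro ballI, clarify)
    fix u v assume "(u, v) \<in> E"
    from arc_inequality[OF this less_imp_le[OF alpha(2)]]
    show "real n > real (nat \<lceil>\<alpha> * real n\<rceil>) + real (indeg E v) + real (qq E u v)
                    + (1 - \<alpha>) * real (nat \<lceil>\<alpha> * real n\<rceil>)
                    + (1 - \<alpha>)^2 * real (tt E u v)"
      unfolding G(2) .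
  qed
qed

end
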